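(* Let $S \subset \mathbb{R}^3$ be a path of length $1$ which is a segment of a (planar) logarithmic spiral starting at its center $0$ and ending at a point $u$. Then the distortion of $S$, namely $\sup_{v\neq w \in S} d_S(v,w)/|v-w|$ where $d_S(v,w)$ is the length of the subarc of $S$ between $v$ and $w$, equals $1/|u|$. Moreover, for every path $\alpha\subset\mathbb{R}^3$ of length $1$ whose diameter is at most $2|u|$, one has $\sup_{v\neq w\in\alpha} d_\alpha(v,w)/|v-w| \geq \frac{1}{2}\cdot\frac{1}{|u|}$.
   Context: A logarithmic spiral centered at $0$ is (up to rotation and scaling, inside a plane through $0$) the curve $\{0\}\cup\{e^{ks}(\cos s,\sin s): s\in\mathbb{R}\}$ for some $k>0$; a segment starting at the center is the closure of its part with $s\in(-\infty,s_1]$. $|\cdot|$ denotes the Euclidean norm. *)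

theory Defs
  imports "HOL-Analysis.Analysis" "HOL-Library.Extended_Real"
begin

definition curve_length :: "(real \<Rightarrow> 'a::metric_space) \<Rightarrow> real \<Rightarrow> real \<Rightarrow> ereal" where
  "curve_length g a b =
     (SUP p \<in> {(n, t). t 0 = a \<and> t n = b \<and> (\<forall>i<n. t i \<le> t (Suc i))}.
        ereal (\<Sum>i<fst p. dist (g (snd p i)) (g (snd p (Suc i)))))"

definition distortion :: "(real \<Rightarrow> 'a::metric_space) \<Rightarrow> ereal" where
  "distortion g =
     (SUP p \<in> {(s, t). 0 \<le> s \<and> s < t \<and> t \<le> 1 \<and> g s \<noteq> g t}.
        curve_length g (fst p) (snd p) / ereal (dist (g (fst p)) (g (snd p))))"

definition log_spiral :: "real \<Rightarrow> real \<Rightarrow> real^3 \<Rightarrow> real^3 \<Rightarrow> real \<Rightarrow> real^3" where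
  "log_spiral c k e1 e2 s = (c * exp (k * s)) *\<^sub>R (cos s *\<^sub>R e1 + sin s *\<^sub>R e2)"

end

theory Submission
  imports Defs
begin

text \<open>Parametrize the spiral by the distance r from its centre. Multiplying r by l > 0 rotates
  the spiral, so it multiplies all distances, and hence all arc lengths, by l. The length of the
  spiral from the centre to radius r is therefore r/|u|, the subarc between radii r \<le> r' has length
  (r' - r)/|u| \<le> |v - w|/|u|, and the whole segment attains this ratio.

  For the lower bound: if the endpoints of \<alpha> differ, they alone give the ratio
  1/|\<alpha>(0) - \<alpha>(1)| \<ge> 1/(2|u|). If \<alpha> is closed, take the last time T at which it leaves its
  base point: just before T the chord back to the base point is arbitrarily short while the subarc
  from time 0 keeps length bounded below, so the distortion is infinite.\<close>

definition partitions :: "real \<Rightarrow> real \<Rightarrow> (nat \<times> (nat \<Rightarrow> real)) set" where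
  "partitions a b = {(n, t). t 0 = a \<and> t n = b \<and> (\<forall>i<n. t i \<le> t (Suc i))}"

definition inscribed_length :: "(real \<Rightarrow> 'a::metric_space) \<Rightarrow> nat \<times> (nat \<Rightarrow> real) \<Rightarrow> real" where
  "inscribed_length f p = (\<Sum>i<fst p. dist (f (snd p i)) (f (snd p (Suc i))))"

lemma curve_length_eq_SUP:
  "curve_length f a b = (SUP p \<in> partitions a b. ereal (inscribed_length f p))"
  unfolding curve_length_def partitions_def inscribed_length_def by simp

lemma inscribed_length_le_curve_length:
  "p \<in> partitions a b \<Longrightarrow> ereal (inscribed_length f p) \<le> curve_length f a b"
  unfolding curve_length_eq_SUP by (rule SUP_upper)

lemma curve_length_le:
  "(\<And>p. p \<in> partitions a b \<Longrightarrow> inscribed_length f p \<le> B) \<Longrightarrow> curve_length f a b \<le> ereal B"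
  unfolding curve_length_eq_SUP by (rule SUP_least) simp

lemma inscribed_length_nonneg: "0 \<le> inscribed_length f p"
  unfolding inscribed_length_def by (simp add: sum_nonneg)

lemma partitions_trivial: "a \<le> b \<Longrightarrow> (1, \<lambda>i. if i = 0 then a else b) \<in> partitions a b"
  unfolding partitions_def by simp

lemma partition_point_bounds:
  assumes "(m, t) \<in> partitions a b" "i \<le> m"
  shows "a \<le> t i" "t i \<le> b"
proof -
  have mono: "\<And>j. j \<in> {..<m} \<Longrightarrow> t j \<le> t (Suc j)" and ends: "t 0 = a" "t m = b"
    using assms(1) by (auto simp: partitions_def)
  have "{0..<i} \<subseteq> {..<m}" "{i..<m} \<subseteq> {..<m}"
    using assms(2) by auto
  then show "a \<le> t i" "t i \<le> b"
    using lift_Suc_mono_le_ivl[of "{..<m}" t, OF mono] assms(2) ends by auto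
qed

lemma partitions_min:
  "(m, t) \<in> partitions a b \<Longrightarrow> a \<le> s \<Longrightarrow> s \<le> b \<Longrightarrow> (m, \<lambda>i. min (t i) s) \<in> partitions a s"
  unfolding partitions_def by (auto simp: min.coboundedI1)

lemma partitions_max:
  "(m, t) \<in> partitions a b \<Longrightarrow> a \<le> s \<Longrightarrow> s \<le> b \<Longrightarrow> (m, \<lambda>i. max (t i) s) \<in> partitions s b"
  unfolding partitions_def by (auto simp: max.coboundedI1)

lemma partitions_append:
  assumes "(m1, t1) \<in> partitions a b" "(m2, t2) \<in> partitions b c"
  defines "t \<equiv> \<lambda>i. if i \<le> m1 then t1 i else t2 (i - m1)"
  shows "(m1 + m2, t) \<in> partitions a c"
    and "inscribed_length f (m1 + m2, t) = inscribed_length f (m1, t1) + inscribed_length f (m2, t2)"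
proof -
  have t1: "t1 0 = a" "t1 m1 = b" "\<forall>i<m1. t1 i \<le> t1 (Suc i)"
    and t2: "t2 0 = b" "t2 m2 = c" "\<forall>i<m2. t2 i \<le> t2 (Suc i)"
    using assms by (auto simp: partitions_def)
  have shift: "t (m1 + i) = t2 i" for i
    using t1 t2 by (cases i) (auto simp: t_def)
  have shift_Suc: "t (Suc (m1 + i)) = t2 (Suc i)" for i
    using shift[of "Suc i"] by simp
  have "t i \<le> t (Suc i)" if "i < m1 + m2" for i
  proof (cases "i < m1")
    case True
    then show ?thesis using t1 by (auto simp: t_def)
  next
    case False
    then obtain j where "i = m1 + j" "j < m2"
      using \<open>i < m1 + m2\<close> le_Suc_ex[of m1 i] by auto
    then show ?thesis using shift[of j] shift_Suc[of j] t2(3) by simp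
  qed
  then show "(m1 + m2, t) \<in> partitions a c"
    using shift[of m2] t1 t2 by (simp add: partitions_def t_def)
  have split: "(\<Sum>i<m1 + m2. h i) = (\<Sum>i<m1. h i) + (\<Sum>i<m2. h (m1 + i))" for h :: "nat \<Rightarrow> real"
    by (induction m2) (simp_all add: add.assoc)
  have "(\<Sum>i<m1. dist (f (t i)) (f (t (Suc i)))) = (\<Sum>i<m1. dist (f (t1 i)) (f (t1 (Suc i))))"
    by (rule sum.cong) (auto simp: t_def)
  then show "inscribed_length f (m1 + m2, t) = inscribed_length f (m1, t1) + inscribed_length f (m2, t2)"
    unfolding inscribed_length_def fst_conv snd_conv split shift shift_Suc by simp
qed

lemma dist_le_split_at:
  fixes f :: "real \<Rightarrow> 'a::metric_space"
  assumes "x \<le> y"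
  shows "dist (f x) (f y) \<le> dist (f (min x s)) (f (min y s)) + dist (f (max x s)) (f (max y s))"
proof (cases "s \<le> x \<or> y \<le> s")
  case True
  then show ?thesis using assms by (auto simp: min_def max_def)
next
  case False
  then show ?thesis using dist_triangle[of "f x" "f y" "f s"] by (simp add: min_def max_def)
qed

lemma curve_length_nonneg:
  assumes "a \<le> b"
  shows "0 \<le> curve_length f a b"
proof -
  have "0 \<le> ereal (inscribed_length f (1, \<lambda>i. if i = 0 then a else b))"
    by (simp add: inscribed_length_nonneg)
  also have "\<dots> \<le> curve_length f a b"
    by (rule inscribed_length_le_curve_length[OF partitions_trivial[OF assms]])
  finally show ?thesis .
qed

lemma curve_length_const:
  assumes "a \<le> b" "\<forall>x\<in>{a..b}. f x = y"
  shows "curve_length f a b = 0"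
proof (rule antisym)
  have "inscribed_length f p \<le> 0" if p_in: "p \<in> partitions a b" for p
  proof -
    obtain m t where p: "p = (m, t)" by (cases p)
    have "f (t i) = y" if "i \<le> m" for i
      using assms(2) partition_point_bounds[OF p_in[unfolded p] that] by simp
    then show ?thesis unfolding p inscribed_length_def by simp
  qed
  then have "curve_length f a b \<le> ereal 0" by (rule curve_length_le)
  then show "curve_length f a b \<le> 0" by (simp add: zero_ereal_def)
qed (rule curve_length_nonneg[OF assms(1)])

lemma curve_length_superadditive:
  fixes f :: "real \<Rightarrow> 'a::metric_space"
  assumes "a \<le> b" "b \<le> c"
  shows "curve_length f a b + curve_length f b c \<le> curve_length f a c"
proof -
  have "curve_length f a b + ereal (inscribed_length f q) \<le> curve_length f a c"
    if q: "q \<in> partitions b c" for q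
  proof -
    have "curve_length f a b + ereal (inscribed_length f q)
        = (SUP p \<in> partitions a b. ereal (inscribed_length f p) + ereal (inscribed_length f q))"
      unfolding curve_length_eq_SUP using partitions_trivial[OF assms(1)]
      by (intro SUP_ereal_add_left[symmetric]) auto
    also have "\<dots> \<le> curve_length f a c"
    proof (rule SUP_least)
      fix p assume "p \<in> partitions a b"
      moreover obtain m1 t1 m2 t2 where "p = (m1, t1)" "q = (m2, t2)"
        by (cases p, cases q)
      ultimately have pq: "(m1, t1) \<in> partitions a b" "(m2, t2) \<in> partitions b c"
        using q by simp_all
      show "ereal (inscribed_length f p) + ereal (inscribed_length f q) \<le> curve_length f a c"
        using inscribed_length_le_curve_length[OF partitions_append(1)[OF pq], of f]
        unfolding partitions_append(2)[OF pq] \<open>p = _\<close> \<open>q = _\<close> by simp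
    qed
    finally show ?thesis .
  qed
  moreover have "curve_length f a b \<noteq> -\<infinity>"
    using curve_length_nonneg[OF assms(1), of f] by auto
  ultimately show ?thesis
    unfolding curve_length_eq_SUP[of f b c] using partitions_trivial[OF assms(2)]
    by (subst SUP_ereal_add_right[symmetric]) (auto intro: SUP_least)
qed

lemma curve_length_subadditive:
  fixes f :: "real \<Rightarrow> 'a::metric_space"
  assumes "a \<le> b" "b \<le> c"
  shows "curve_length f a c \<le> curve_length f a b + curve_length f b c"
  unfolding curve_length_eq_SUP[of f a c]
proof (rule SUP_least)
  fix p assume "p \<in> partitions a c"
  then obtain m t where p: "p = (m, t)" "(m, t) \<in> partitions a c" by (cases p) auto
  let ?lo = "(m, \<lambda>i. min (t i) b)" and ?hi = "(m, \<lambda>i. max (t i) b)"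
  have "inscribed_length f p \<le> inscribed_length f ?lo + inscribed_length f ?hi"
    using p unfolding inscribed_length_def partitions_def
    by (auto simp: sum.distrib[symmetric] intro!: sum_mono dist_le_split_at)
  also have "ereal (inscribed_length f ?lo + inscribed_length f ?hi)
      \<le> curve_length f a b + curve_length f b c"
    using add_mono[OF inscribed_length_le_curve_length[OF partitions_min[OF p(2) assms], of f]
        inscribed_length_le_curve_length[OF partitions_max[OF p(2) assms], of f]]
    by simp
  finally show "ereal (inscribed_length f p) \<le> curve_length f a b + curve_length f b c" by simp
qed

lemma curve_length_add:
  fixes f :: "real \<Rightarrow> 'a::metric_space"
  assumes "a \<le> b" "b \<le> c"
  shows "curve_length f a b + curve_length f b c = curve_length f a c"
  using curve_length_superadditive[OF assms] curve_length_subadditive[OF assms] by (rule antisym)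

lemma curve_length_scale_le:
  fixes f :: "real \<Rightarrow> 'a::metric_space"
  assumes hom: "\<And>x y. 0 \<le> x \<Longrightarrow> 0 \<le> y \<Longrightarrow> dist (f (l * x)) (f (l * y)) = l * dist (f x) (f y)"
    and "0 < l" "0 \<le> a"
  shows "curve_length f (l * a) (l * b) \<le> ereal l * curve_length f a b"
  unfolding curve_length_eq_SUP[of f "l * a"]
proof (rule SUP_least)
  fix p assume "p \<in> partitions (l * a) (l * b)"
  then obtain m t where p: "p = (m, t)" "(m, t) \<in> partitions (l * a) (l * b)" by (cases p) auto
  have "0 \<le> l * a" using assms by simp
  then have nonneg: "0 \<le> t i" if "i \<le> m" for i
    using partition_point_bounds(1)[OF p(2) that] by simp
  have scaled: "(m, \<lambda>i. t i / l) \<in> partitions a b"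
    using p(2) assms unfolding partitions_def by (auto simp: divide_right_mono)
  have "dist (f (t i)) (f (t (Suc i))) = l * dist (f (t i / l)) (f (t (Suc i) / l))" if "i < m" for i
    using hom[of "t i / l" "t (Suc i) / l"] nonneg[of i] nonneg[of "Suc i"] that assms(2) by simp
  then have "inscribed_length f p = l * inscribed_length f (m, \<lambda>i. t i / l)"
    unfolding p(1) inscribed_length_def by (simp add: sum_distrib_left)
  then have "ereal (inscribed_length f p) = ereal l * ereal (inscribed_length f (m, \<lambda>i. t i / l))"
    by simp
  also have "\<dots> \<le> ereal l * curve_length f a b"
    using inscribed_length_le_curve_length[OF scaled] assms(2) by (intro ereal_mult_left_mono) auto
  finally show "ereal (inscribed_length f p) \<le> ereal l * curve_length f a b" .
qed

lemma curve_length_scale: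
  fixes f :: "real \<Rightarrow> 'a::metric_space"
  assumes hom: "\<And>l x y. 0 < l \<Longrightarrow> 0 \<le> x \<Longrightarrow> 0 \<le> y \<Longrightarrow> dist (f (l * x)) (f (l * y)) = l * dist (f x) (f y)"
    and "0 < l" "0 \<le> a"
  shows "curve_length f (l * a) (l * b) = ereal l * curve_length f a b"
proof (rule antisym)
  show "curve_length f (l * a) (l * b) \<le> ereal l * curve_length f a b"
    using assms(2,3) by (intro curve_length_scale_le hom)
  have "curve_length f a b = curve_length f ((1 / l) * (l * a)) ((1 / l) * (l * b))"
    using assms by simp
  also have "\<dots> \<le> ereal (1 / l) * curve_length f (l * a) (l * b)"
    using assms by (intro curve_length_scale_le hom) auto
  finally have "ereal l * curve_length f a b \<le> ereal l * (ereal (1 / l) * curve_length f (l * a) (l * b))"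
    using assms by (intro ereal_mult_left_mono) auto
  also have "\<dots> = curve_length f (l * a) (l * b)"
    using assms by (simp add: mult.assoc[symmetric])
  finally show "ereal l * curve_length f a b \<le> curve_length f (l * a) (l * b)" .
qed

lemma curve_length_reparam_le:
  fixes \<phi> :: "real \<Rightarrow> real" and f :: "real \<Rightarrow> 'a::metric_space"
  assumes mono: "mono_on {a..b} \<phi>" and g: "\<forall>x\<in>{a..b}. g x = f (\<phi> x)"
  shows "curve_length g a b \<le> curve_length f (\<phi> a) (\<phi> b)"
  unfolding curve_length_eq_SUP[of g]
proof (rule SUP_least)
  fix p assume "p \<in> partitions a b"
  then obtain m t where p: "p = (m, t)" "(m, t) \<in> partitions a b" by (cases p) auto
  have t_in: "t i \<in> {a..b}" if "i \<le> m" for i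
    using partition_point_bounds[OF p(2) that] by simp
  have "(m, \<phi> \<circ> t) \<in> partitions (\<phi> a) (\<phi> b)"
    using p(2) t_in mono_onD[OF mono] unfolding partitions_def by auto
  moreover have "inscribed_length g p = inscribed_length f (m, \<phi> \<circ> t)"
    unfolding p(1) inscribed_length_def using g t_in by (auto intro!: sum.cong)
  ultimately show "ereal (inscribed_length g p) \<le> curve_length f (\<phi> a) (\<phi> b)"
    by (simp add: inscribed_length_le_curve_length)
qed

lemma curve_length_reparam:
  fixes \<phi> :: "real \<Rightarrow> real" and f :: "real \<Rightarrow> 'a::metric_space"
  assumes "a \<le> b" and cont: "continuous_on {a..b} \<phi>" and mono: "strict_mono_on {a..b} \<phi>"
    and g: "\<forall>x\<in>{a..b}. g x = f (\<phi> x)"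
  shows "curve_length g a b = curve_length f (\<phi> a) (\<phi> b)"
proof (rule antisym)
  show "curve_length g a b \<le> curve_length f (\<phi> a) (\<phi> b)"
    using strict_mono_on_imp_mono_on[OF mono] g by (rule curve_length_reparam_le)
  define \<nu> where "\<nu> = inv_into {a..b} \<phi>"
  have \<nu>_\<phi>: "\<nu> (\<phi> x) = x" if "x \<in> {a..b}" for x
    unfolding \<nu>_def using strict_mono_on_imp_inj_on[OF mono] that by (rule inv_into_f_f)
  have onto: "y \<in> \<phi> ` {a..b}" if "y \<in> {\<phi> a..\<phi> b}" for y
    using IVT'[of \<phi> a y b] that assms(1) cont by auto
  have \<nu>_in: "\<nu> y \<in> {a..b}" and \<phi>_\<nu>: "\<phi> (\<nu> y) = y" if "y \<in> {\<phi> a..\<phi> b}" for y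
    using inv_into_into[OF onto[OF that]] f_inv_into_f[OF onto[OF that]] unfolding \<nu>_def by simp_all
  have "mono_on {\<phi> a..\<phi> b} \<nu>"
  proof (rule mono_onI, rule ccontr)
    fix y y' assume y: "y \<in> {\<phi> a..\<phi> b}" "y' \<in> {\<phi> a..\<phi> b}" "y \<le> y'" and "\<not> \<nu> y \<le> \<nu> y'"
    then have "\<phi> (\<nu> y') < \<phi> (\<nu> y)"
      using \<nu>_in by (intro strict_mono_onD[OF mono]) auto
    then show False using y \<phi>_\<nu> by simp
  qed
  moreover have "\<forall>y\<in>{\<phi> a..\<phi> b}. f y = g (\<nu> y)"
    using g \<nu>_in \<phi>_\<nu> by simp
  ultimately have "curve_length f (\<phi> a) (\<phi> b) \<le> curve_length g (\<nu> (\<phi> a)) (\<nu> (\<phi> b))"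
    by (rule curve_length_reparam_le)
  then show "curve_length f (\<phi> a) (\<phi> b) \<le> curve_length g a b"
    using \<nu>_\<phi> assms(1) by simp
qed

lemma continuous_on_inscribed_length_min:
  fixes f :: "real \<Rightarrow> 'a::metric_space"
  assumes cont: "continuous_on {a..b} f" and p: "(m, t) \<in> partitions a b"
  shows "continuous_on {a..b} (\<lambda>s. inscribed_length f (m, \<lambda>i. min (t i) s))"
proof -
  have "continuous_on {a..b} (\<lambda>s. f (min (t i) s))" if "i \<le> m" for i
    using partition_point_bounds[OF p that]
    by (intro continuous_on_compose2[OF cont]) (auto intro: continuous_intros)
  then show ?thesis
    unfolding inscribed_length_def by (auto intro!: continuous_intros)
qed

lemma distortion_ge:
  assumes "0 \<le> s" "s < t" "t \<le> 1" "f s \<noteq> f t"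
  shows "curve_length f s t / ereal (dist (f s) (f t)) \<le> distortion f"
proof -
  have "(s, t) \<in> {(s, t). 0 \<le> s \<and> s < t \<and> t \<le> 1 \<and> f s \<noteq> f t}"
    using assms by simp
  then show ?thesis
    unfolding distortion_def by (rule SUP_upper2) simp
qed

lemma distortion_le:
  assumes "\<And>s t. 0 \<le> s \<Longrightarrow> s < t \<Longrightarrow> t \<le> 1 \<Longrightarrow> f s \<noteq> f t \<Longrightarrow>
      curve_length f s t \<le> ereal (B * dist (f s) (f t))"
  shows "distortion f \<le> ereal B"
  unfolding distortion_def
proof (rule SUP_least)
  fix p assume "p \<in> {(s, t). 0 \<le> s \<and> s < t \<and> t \<le> 1 \<and> f s \<noteq> f t}"
  then obtain s t where p: "p = (s, t)" and st: "0 \<le> s" "s < t" "t \<le> 1" "f s \<noteq> f t" by auto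
  have "curve_length f s t \<le> ereal (dist (f s) (f t)) * ereal B"
    using assms[OF st] by (simp add: mult.commute)
  then have "curve_length f s t / ereal (dist (f s) (f t)) \<le> ereal B"
    using st(4) by (subst ereal_divide_le_pos) auto
  then show "curve_length f (fst p) (snd p) / ereal (dist (f (fst p)) (f (snd p))) \<le> ereal B"
    using p by simp
qed

lemma path_last_departure:
  fixes \<alpha> :: "real \<Rightarrow> 'a::metric_space"
  assumes "path \<alpha>" "\<alpha> 0 = \<alpha> 1" "t0 \<in> {0..1}" "\<alpha> t0 \<noteq> \<alpha> 0"
  obtains T where "0 \<le> T" "T \<le> 1" "\<forall>x\<in>{T..1}. \<alpha> x = \<alpha> 0"
    "\<forall>t\<in>{0..1}. \<alpha> t \<noteq> \<alpha> 0 \<longrightarrow> t < T" "T islimpt {t \<in> {0..1}. \<alpha> t \<noteq> \<alpha> 0}"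
proof -
  define A where "A = {t \<in> {0..1}. \<alpha> t \<noteq> \<alpha> 0}"
  define T where "T = Sup A"
  have "t0 \<in> A" using assms by (simp add: A_def)
  have bdd: "bdd_above A" by (rule bdd_aboveI[of _ 1]) (auto simp: A_def)
  have upper: "t \<le> T" if "t \<in> A" for t
    unfolding T_def using cSup_upper[OF that bdd] .
  have "0 \<le> T" "T \<le> 1"
    using upper[OF \<open>t0 \<in> A\<close>] assms(3) \<open>t0 \<in> A\<close> unfolding T_def
    by (auto intro!: cSup_least simp: A_def)
  have beyond: "\<alpha> x = \<alpha> 0" if "x \<in> {0..1}" "T < x" for x
    using upper[of x] that by (auto simp: A_def)
  have "\<alpha> T = \<alpha> 0"
  proof (cases "T = 1")
    case True
    then show ?thesis using assms(2) by simp
  next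
    case False
    have "closed {x \<in> {0..1}. \<alpha> x = \<alpha> 0}"
      using assms(1) by (intro continuous_closed_preimage_constant) (auto simp: path_def)
    moreover have "{T<..1} \<subseteq> {x \<in> {0..1}. \<alpha> x = \<alpha> 0}"
      using beyond \<open>0 \<le> T\<close> by auto
    ultimately have "closure {T<..1} \<subseteq> {x \<in> {0..1}. \<alpha> x = \<alpha> 0}"
      by (intro closure_minimal)
    moreover have "T \<in> closure {T<..1}"
      using False \<open>T \<le> 1\<close> by simp
    ultimately show ?thesis by blast
  qed
  then have "\<forall>x\<in>{T..1}. \<alpha> x = \<alpha> 0"
    using beyond \<open>0 \<le> T\<close> by (metis atLeastAtMost_iff order.trans order_less_le)
  moreover have "\<forall>t\<in>{0..1}. \<alpha> t \<noteq> \<alpha> 0 \<longrightarrow> t < T"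
    using upper \<open>\<alpha> T = \<alpha> 0\<close> by (force simp: A_def order_less_le)
  moreover have "T islimpt A"
    using closure_contains_Sup[OF _ bdd] \<open>t0 \<in> A\<close> \<open>\<alpha> T = \<alpha> 0\<close>
    unfolding T_def closure_def A_def by auto
  ultimately show ?thesis
    using that \<open>0 \<le> T\<close> \<open>T \<le> 1\<close> unfolding A_def by blast
qed

lemma long_subarcs_near_endpoint:
  fixes \<alpha> :: "real \<Rightarrow> 'a::metric_space"
  assumes cont: "continuous_on {a..T} \<alpha>" and "ereal l < curve_length \<alpha> a T"
    and "T islimpt A" "A \<subseteq> {a..T}" "0 < \<epsilon>"
  obtains s where "s \<in> A" "ereal l < curve_length \<alpha> a s" "dist (\<alpha> s) (\<alpha> T) < \<epsilon>"
proof -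
  obtain m t where p: "(m, t) \<in> partitions a T" and l_less: "l < inscribed_length \<alpha> (m, t)"
    using assms(2) unfolding curve_length_eq_SUP less_SUP_iff by auto
  define h where "h s = inscribed_length \<alpha> (m, \<lambda>i. min (t i) s)" for s
  have hT: "h T = inscribed_length \<alpha> (m, t)"
    using partition_point_bounds(2)[OF p] unfolding h_def inscribed_length_def by simp
  have "T \<in> {a..T}"
    using p partition_point_bounds[OF p, of 0] by (simp add: partitions_def)
  then have "(\<alpha> \<longlongrightarrow> \<alpha> T) (at T within A)" "(h \<longlongrightarrow> h T) (at T within A)"
    using cont continuous_on_inscribed_length_min[OF cont p] assms(4)
    unfolding continuous_on_def h_def by (auto intro: tendsto_within_subset)
  then have "\<forall>\<^sub>F s in at T within A. l < h s" "\<forall>\<^sub>F s in at T within A. dist (\<alpha> s) (\<alpha> T) < \<epsilon>"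
    using hT l_less \<open>0 < \<epsilon>\<close> by (simp_all add: order_tendstoD(1) tendstoD)
  moreover have "\<forall>\<^sub>F s in at T within A. s \<in> A"
    unfolding eventually_at_topological by (intro exI[of _ UNIV]) simp
  ultimately have "\<forall>\<^sub>F s in at T within A. l < h s \<and> dist (\<alpha> s) (\<alpha> T) < \<epsilon> \<and> s \<in> A"
    by (simp add: eventually_conj_iff)
  moreover have "at T within A \<noteq> bot"
    using assms(3) trivial_limit_within by blast
  ultimately obtain s where s: "l < h s" "dist (\<alpha> s) (\<alpha> T) < \<epsilon>" "s \<in> A"
    using eventually_happens' by blast
  have "ereal (h s) \<le> curve_length \<alpha> a s"
    unfolding h_def using s(3) assms(4) by (intro inscribed_length_le_curve_length partitions_min[OF p]) auto
  moreover have "ereal l < ereal (h s)"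
    using s(1) by simp
  ultimately have "ereal l < curve_length \<alpha> a s"
    by (rule order_less_le_trans[rotated])
  then show ?thesis using that s(2,3) by blast
qed

lemma distortion_closed_path:
  fixes \<alpha> :: "real \<Rightarrow> 'a::metric_space"
  assumes "path \<alpha>" "\<alpha> 0 = \<alpha> 1" "0 < curve_length \<alpha> 0 1"
  shows "distortion \<alpha> = \<infinity>"
proof (rule ereal_top)
  fix B :: real
  obtain t0 where "t0 \<in> {0..1}" "\<alpha> t0 \<noteq> \<alpha> 0"
  proof (rule ccontr)
    assume "\<not> thesis"
    with that have "\<forall>x\<in>{0..1}. \<alpha> x = \<alpha> 0" by blast
    then have "curve_length \<alpha> 0 1 = 0" by (rule curve_length_const[rotated]) simp
    then show False using assms(3) by simp
  qed
  then obtain T where T: "0 \<le> T" "T \<le> 1" "\<forall>x\<in>{T..1}. \<alpha> x = \<alpha> 0"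
      "\<forall>t\<in>{0..1}. \<alpha> t \<noteq> \<alpha> 0 \<longrightarrow> t < T" "T islimpt {t \<in> {0..1}. \<alpha> t \<noteq> \<alpha> 0}"
    by (rule path_last_departure[OF assms(1,2)])
  have "\<alpha> T = \<alpha> 0"
    using bspec[OF T(3), of T] T(2) by simp
  have "curve_length \<alpha> T 1 = 0"
    using T(2,3) by (rule curve_length_const)
  then have "0 < curve_length \<alpha> 0 T"
    using curve_length_add[of 0 T 1 \<alpha>] T(1,2) assms(3) by simp
  then obtain l where "0 < ereal l" and l_less: "ereal l < curve_length \<alpha> 0 T"
    using ereal_dense2 by blast
  have cont: "continuous_on {0..T} \<alpha>"
    using assms(1) unfolding path_def by (rule continuous_on_subset) (use T(2) in auto)
  have sub: "{t \<in> {0..1}. \<alpha> t \<noteq> \<alpha> 0} \<subseteq> {0..T}"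
    using T(4) by (auto simp: less_imp_le)
  have "0 < l / max B 1" using \<open>0 < ereal l\<close> by simp
  then obtain s where s: "s \<in> {t \<in> {0..1}. \<alpha> t \<noteq> \<alpha> 0}" "ereal l < curve_length \<alpha> 0 s"
      "dist (\<alpha> s) (\<alpha> T) < l / max B 1"
    using long_subarcs_near_endpoint[OF cont l_less T(5) sub] by blast
  define d where "d = dist (\<alpha> 0) (\<alpha> s)"
  have "0 < d" "0 < s" using s(1) by (auto simp: d_def order_less_le)
  have "d < l / max B 1"
    using s(3) \<open>\<alpha> T = \<alpha> 0\<close> by (simp add: d_def dist_commute)
  then have "d * max B 1 < l" by (simp add: pos_less_divide_eq)
  moreover have "d * B \<le> d * max B 1"
    using \<open>0 < d\<close> by (intro mult_left_mono) auto
  ultimately have "ereal d * ereal B \<le> ereal l" by simp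
  also have "\<dots> \<le> curve_length \<alpha> 0 s" using s(2) by (rule less_imp_le)
  finally have "ereal B \<le> curve_length \<alpha> 0 s / ereal d"
    using \<open>0 < d\<close> by (subst ereal_le_divide_pos) auto
  also have "\<dots> \<le> distortion \<alpha>"
    unfolding d_def using s(1) \<open>0 < s\<close> by (intro distortion_ge) auto
  finally show "ereal B \<le> distortion \<alpha>" .
qed

lemma distortion_ge_length_div_diameter:
  fixes \<alpha> :: "real \<Rightarrow> 'a::metric_space"
  assumes "path \<alpha>" "curve_length \<alpha> 0 1 = ereal L" "0 < L" "diameter (\<alpha> ` {0..1}) \<le> D"
  shows "ereal (L / D) \<le> distortion \<alpha>"
proof (cases "\<alpha> 0 = \<alpha> 1")
  case True
  then show ?thesis using distortion_closed_path[OF assms(1) True] assms(2,3) by simp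
next
  case False
  have "bounded (\<alpha> ` {0..1})"
    using compact_path_image[OF assms(1)] by (simp add: path_image_def compact_imp_bounded)
  then have "dist (\<alpha> 0) (\<alpha> 1) \<le> D"
    using diameter_bounded_bound[of "\<alpha> ` {0..1}" "\<alpha> 0" "\<alpha> 1"] assms(4) by auto
  moreover have "0 < dist (\<alpha> 0) (\<alpha> 1)"
    using False by simp
  ultimately have "L / D \<le> L / dist (\<alpha> 0) (\<alpha> 1)"
    using assms(3) by (intro divide_left_mono mult_pos_pos) linarith+
  also have "ereal (L / dist (\<alpha> 0) (\<alpha> 1)) = curve_length \<alpha> 0 1 / ereal (dist (\<alpha> 0) (\<alpha> 1))"
    using assms(2) False by simp
  also have "\<dots> \<le> distortion \<alpha>"
    using False by (intro distortion_ge) auto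
  finally show ?thesis by simp
qed

text \<open>The point of the spiral at distance r from its centre: log_spiral c k e1 e2 s is the point
  at radius r = c e^(ks). At r = 0 the angle is meaningless but the point is the centre.\<close>

definition spiral_at_radius :: "real \<Rightarrow> real \<Rightarrow> 'a \<Rightarrow> 'a \<Rightarrow> real \<Rightarrow> 'a::real_normed_vector" where
  "spiral_at_radius c k e1 e2 r = r *\<^sub>R (cos (ln (r / c) / k) *\<^sub>R e1 + sin (ln (r / c) / k) *\<^sub>R e2)"

lemma log_spiral_eq_spiral_at_radius:
  "0 < c \<Longrightarrow> k \<noteq> 0 \<Longrightarrow> log_spiral c k e1 e2 s = spiral_at_radius c k e1 e2 (c * exp (k * s))"
  by (simp add: log_spiral_def spiral_at_radius_def)

lemma log_spiral_segment_on_spiral_at_radius: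
  assumes "0 < c" "k \<noteq> 0" "x \<in> {0} \<union> {log_spiral c k e1 e2 s | s. s \<le> s1}"
  shows "\<exists>r\<ge>0. x = spiral_at_radius c k e1 e2 r"
proof (cases "x = 0")
  case True
  then show ?thesis by (intro exI[of _ 0]) (simp add: spiral_at_radius_def)
next
  case False
  then obtain s where "x = log_spiral c k e1 e2 s" using assms(3) by blast
  then show ?thesis
    using assms(1,2) by (intro exI[of _ "c * exp (k * s)"]) (simp add: log_spiral_eq_spiral_at_radius)
qed

lemma norm_orthonormal_combination:
  fixes e1 e2 :: "'a::real_inner"
  assumes "norm e1 = 1" "norm e2 = 1" "e1 \<bullet> e2 = 0"
  shows "(norm (a *\<^sub>R e1 + b *\<^sub>R e2))\<^sup>2 = a\<^sup>2 + b\<^sup>2"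
proof -
  have "e1 \<bullet> e1 = 1" "e2 \<bullet> e2 = 1" "e2 \<bullet> e1 = 0"
    using assms by (simp_all add: power2_norm_eq_inner[symmetric] inner_commute)
  then show ?thesis
    using assms(3) unfolding power2_norm_eq_inner
    by (simp add: inner_add_left inner_add_right power2_eq_square)
qed

lemma dist_spiral_at_radius:
  fixes e1 e2 :: "'a::real_inner"
  assumes "norm e1 = 1" "norm e2 = 1" "e1 \<bullet> e2 = 0"
  shows "(dist (spiral_at_radius c k e1 e2 x) (spiral_at_radius c k e1 e2 y))\<^sup>2
    = x\<^sup>2 + y\<^sup>2 - 2 * x * y * cos (ln (x / c) / k - ln (y / c) / k)"
proof -
  define a b where "a = ln (x / c) / k" and "b = ln (y / c) / k"
  have "spiral_at_radius c k e1 e2 x - spiral_at_radius c k e1 e2 y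
      = (x * cos a - y * cos b) *\<^sub>R e1 + (x * sin a - y * sin b) *\<^sub>R e2"
    unfolding spiral_at_radius_def a_def b_def by (simp add: algebra_simps)
  then have "(dist (spiral_at_radius c k e1 e2 x) (spiral_at_radius c k e1 e2 y))\<^sup>2
      = (x * cos a - y * cos b)\<^sup>2 + (x * sin a - y * sin b)\<^sup>2"
    by (simp add: dist_norm norm_orthonormal_combination[OF assms])
  also have "\<dots> = x\<^sup>2 * ((sin a)\<^sup>2 + (cos a)\<^sup>2) + y\<^sup>2 * ((sin b)\<^sup>2 + (cos b)\<^sup>2)
      - 2 * x * y * (cos a * cos b + sin a * sin b)"
    by (simp add: power2_eq_square; algebra)
  also have "\<dots> = x\<^sup>2 + y\<^sup>2 - 2 * x * y * cos (a - b)"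
    unfolding sin_cos_squared_add by (simp add: cos_diff)
  finally show ?thesis unfolding a_def b_def .
qed

lemma norm_spiral_at_radius:
  fixes e1 e2 :: "'a::real_inner"
  assumes "norm e1 = 1" "norm e2 = 1" "e1 \<bullet> e2 = 0"
  shows "norm (spiral_at_radius c k e1 e2 r) = \<bar>r\<bar>"
proof -
  have "(norm (spiral_at_radius c k e1 e2 r))\<^sup>2 = r\<^sup>2"
    using dist_spiral_at_radius[OF assms, of c k r 0] by (simp add: spiral_at_radius_def)
  then show ?thesis by (metis norm_ge_zero power2_eq_iff_nonneg abs_ge_zero power2_abs)
qed

lemma dist_spiral_at_radius_scale:
  fixes e1 e2 :: "'a::real_inner"
  assumes "norm e1 = 1" "norm e2 = 1" "e1 \<bullet> e2 = 0" "0 < c" "0 < l" "0 \<le> x" "0 \<le> y"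
  shows "dist (spiral_at_radius c k e1 e2 (l * x)) (spiral_at_radius c k e1 e2 (l * y))
    = l * dist (spiral_at_radius c k e1 e2 x) (spiral_at_radius c k e1 e2 y)"
proof (cases "x = 0 \<or> y = 0")
  case True
  have "spiral_at_radius c k e1 e2 0 = 0" by (simp add: spiral_at_radius_def)
  with True show ?thesis
    using assms by (auto simp: norm_spiral_at_radius[OF assms(1-3)] dist_commute)
next
  case False
  then have "0 < x" "0 < y" using assms by auto
  then have "ln (l * x / c) = ln l + ln (x / c)" "ln (l * y / c) = ln l + ln (y / c)"
    using ln_mult[of l "x / c"] ln_mult[of l "y / c"] assms by (simp_all add: mult.assoc)
  then have "ln (l * x / c) / k - ln (l * y / c) / k = ln (x / c) / k - ln (y / c) / k"
    by (simp add: diff_divide_distrib[symmetric])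
  then have angle: "cos (ln (l * x / c) / k - ln (l * y / c) / k) = cos (ln (x / c) / k - ln (y / c) / k)"
    by simp
  have "(dist (spiral_at_radius c k e1 e2 (l * x)) (spiral_at_radius c k e1 e2 (l * y)))\<^sup>2
      = (l * dist (spiral_at_radius c k e1 e2 x) (spiral_at_radius c k e1 e2 y))\<^sup>2"
    unfolding angle power_mult_distrib dist_spiral_at_radius[OF assms(1-3)]
    by (simp add: algebra_simps power2_eq_square)
  then show ?thesis using assms by (simp add: power2_eq_iff_nonneg)
qed

locale spiral_arc =
  fixes c k L :: real and e1 e2 :: "'a::real_inner" and g :: "real \<Rightarrow> 'a"
  assumes c_pos: "0 < c"
    and orthonormal: "norm e1 = 1" "norm e2 = 1" "e1 \<bullet> e2 = 0"
    and arc: "arc g"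
    and on_spiral: "\<forall>t\<in>{0..1}. \<exists>r\<ge>0. g t = spiral_at_radius c k e1 e2 r"
    and starts_at_centre: "g 0 = 0"
    and ends_off_centre: "g 1 \<noteq> 0"
    and length: "curve_length g 0 1 = ereal L"
begin

abbreviation spiral :: "real \<Rightarrow> 'a" where
  "spiral \<equiv> spiral_at_radius c k e1 e2"

definition radius :: "real \<Rightarrow> real" where
  "radius t = norm (g t)"

lemma g_eq_spiral_radius:
  assumes "t \<in> {0..1}"
  shows "g t = spiral (radius t)"
proof -
  obtain r where "0 \<le> r" "g t = spiral r"
    using on_spiral assms by blast
  moreover have "radius t = r"
    using calculation norm_spiral_at_radius[OF orthonormal] by (simp add: radius_def)
  ultimately show ?thesis by simp
qed

lemma radius_continuous: "continuous_on {0..1} radius"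
  unfolding radius_def using arc by (intro continuous_on_norm) (simp add: arc_imp_path[unfolded path_def])

lemma radius_strict_mono: "strict_mono_on {0..1} radius"
proof -
  have "inj_on radius {0..1}"
    using arc g_eq_spiral_radius unfolding arc_def by (metis inj_on_def)
  then have "strict_mono_on {0..1} radius \<or> strict_antimono_on {0..1} radius"
    using injective_eq_monotone_map[OF is_interval_cc radius_continuous] by blast
  moreover have "radius 0 < radius 1"
    using starts_at_centre ends_off_centre by (simp add: radius_def)
  ultimately show ?thesis
    by (auto dest: monotone_onD[of "{0..1}" _ _ _ 0 1])
qed

lemma curve_length_eq_spiral:
  assumes "0 \<le> s" "s \<le> t" "t \<le> 1"
  shows "curve_length g s t = curve_length spiral (radius s) (radius t)"
  using assms g_eq_spiral_radius
  by (intro curve_length_reparam continuous_on_subset[OF radius_continuous]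
        monotone_on_subset[OF radius_strict_mono]) auto

lemma curve_length_spiral_from_centre:
  assumes "0 \<le> r"
  shows "curve_length spiral 0 r = ereal (r * (L / radius 1))"
proof (cases "r = 0")
  case True
  then show ?thesis
    using curve_length_const[of 0 0 spiral "spiral 0"] by (simp add: zero_ereal_def)
next
  case False
  have "0 < radius 1" using ends_off_centre by (simp add: radius_def)
  have "curve_length spiral 0 (radius 1) = ereal L"
    using curve_length_eq_spiral[of 0 1] length starts_at_centre by (simp add: radius_def)
  moreover have "curve_length spiral ((r / radius 1) * 0) ((r / radius 1) * radius 1)
      = ereal (r / radius 1) * curve_length spiral 0 (radius 1)"
    using assms False \<open>0 < radius 1\<close> c_pos
    by (intro curve_length_scale dist_spiral_at_radius_scale[OF orthonormal]) auto
  ultimately show ?thesis using \<open>0 < radius 1\<close> by simp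
qed

lemma curve_length_le_chord:
  assumes "0 \<le> s" "s \<le> t" "t \<le> 1"
  shows "curve_length g s t \<le> ereal (L / radius 1 * dist (g s) (g t))"
proof -
  have "0 \<le> radius s" "radius s \<le> radius t"
    using assms strict_mono_on_leD[OF radius_strict_mono] by (auto simp: radius_def)
  then have "ereal (radius s * (L / radius 1)) + curve_length spiral (radius s) (radius t)
      = ereal (radius t * (L / radius 1))"
    using curve_length_add[of 0 "radius s" "radius t" spiral] curve_length_spiral_from_centre by simp
  then have "curve_length g s t = ereal (L / radius 1 * (radius t - radius s))"
    using curve_length_eq_spiral[OF assms]
    by (cases "curve_length spiral (radius s) (radius t)") (auto simp: algebra_simps)
  also have "\<dots> \<le> ereal (L / radius 1 * dist (g s) (g t))"
  proof -
    have "radius t - radius s \<le> dist (g s) (g t)"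
      unfolding radius_def dist_norm using norm_triangle_ineq2[of "g t" "g s"]
      by (simp add: norm_minus_commute)
    moreover have "0 \<le> L / radius 1"
      using curve_length_nonneg[of 0 1 g] length by (simp add: radius_def)
    ultimately have "L / radius 1 * (radius t - radius s) \<le> L / radius 1 * dist (g s) (g t)"
      by (intro mult_left_mono)
    then show ?thesis by simp
  qed
  finally show ?thesis .
qed

lemma distortion_eq_length_div_chord: "distortion g = ereal (L / radius 1)"
proof (rule antisym)
  show "distortion g \<le> ereal (L / radius 1)"
    using curve_length_le_chord by (intro distortion_le) auto
  have "ereal (L / radius 1) = curve_length g 0 1 / ereal (dist (g 0) (g 1))"
    using length starts_at_centre ends_off_centre by (simp add: radius_def)
  also have "\<dots> \<le> distortion g"
    using starts_at_centre ends_off_centre by (intro distortion_ge) auto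
  finally show "ereal (L / radius 1) \<le> distortion g" .
qed

end

theorem mainTheorem3:
  fixes g :: "real \<Rightarrow> real^3" and e1 e2 u :: "real^3" and c k s1 :: real
  assumes "c > 0" and "k > 0"
    and "norm e1 = 1" and "norm e2 = 1" and "e1 \<bullet> e2 = 0"
    and "arc g"
    and "g ` {0..1} = {0} \<union> {log_spiral c k e1 e2 s | s. s \<le> s1}"
    and "g 0 = 0" and "u = log_spiral c k e1 e2 s1" and "g 1 = u"
    and "curve_length g 0 1 = 1"
  shows "distortion g = ereal (1 / norm u) \<and>
         (\<forall>\<alpha> :: real \<Rightarrow> real^3. path \<alpha> \<and> curve_length \<alpha> 0 1 = 1 \<and>
             diameter (\<alpha> ` {0..1}) \<le> 2 * norm u
           \<longrightarrow> distortion \<alpha> \<ge> ereal (1 / 2 * (1 / norm u)))"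
proof -
  have "norm u = c * exp (k * s1)"
    using assms(1,2,9) norm_spiral_at_radius[OF assms(3-5)] by (simp add: log_spiral_eq_spiral_at_radius)
  moreover have "\<forall>t\<in>{0..1}. \<exists>r\<ge>0. g t = spiral_at_radius c k e1 e2 r"
    using assms(1,2,7) by (intro ballI log_spiral_segment_on_spiral_at_radius) auto
  ultimately interpret spiral_arc c k 1 e1 e2 g
    using assms by unfold_locales (auto simp: one_ereal_def)
  have "distortion g = ereal (1 / norm u)"
    using distortion_eq_length_div_chord assms(10) by (simp add: radius_def)
  moreover have "ereal (1 / 2 * (1 / norm u)) \<le> distortion \<alpha>"
    if "path \<alpha>" "curve_length \<alpha> 0 1 = 1" "diameter (\<alpha> ` {0..1}) \<le> 2 * norm u" for \<alpha> :: "real \<Rightarrow> real^3"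
    using distortion_ge_length_div_diameter[of \<alpha> 1 "2 * norm u"] that by (simp add: one_ereal_def)
  ultimately show ?thesis by blast
qed

end
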